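(* For all $a,b>0$, $$H(a,b)\le\lambda_{-1}(a,b)\le G(a,b)\le\lambda_0(a,b)\le L(a,b)\le\lambda_1(a,b)\le I(a,b).$$
   Context: For $a,b>0$ with $a\neq b$ define $$\lambda_{-1}(a,b)=\dfrac{2\log\frac{a+b}{2}-\log a-\log b}{\frac{1}{2a}+\frac{1}{2b}-\frac{2}{a+b}},\quad \lambda_0(a,b)=\dfrac{a\log a+b\log b-(a+b)\log\frac{a+b}{2}}{2\log\frac{a+b}{2}-\log a-\log b},$$ $$\lambda_1(a,b)=\dfrac{(b-a)^2}{4\left(a\log a+b\log b-(a+b)\log\frac{a+b}{2}\right)},$$ and $\lambda_s(a,a)=a$. Here $H(a,b)=2(1/a+1/b)^{-1}$, $G(a,b)=\sqrt{ab}$, $L(a,b)=\frac{b-a}{\log b-\log a}$, $I(a,b)=\frac1e(b^b/a^a)^{1/(b-a)}$ for $a\neq b$, with $L(a,a)=I(a,a)=a$. *)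

theory Defs
  imports Complex_Main
begin

definition lam_m1 :: "real \<Rightarrow> real \<Rightarrow> real" where
  "lam_m1 a b = (if a = b then a else
     (2 * ln ((a + b) / 2) - ln a - ln b) / (1 / (2 * a) + 1 / (2 * b) - 2 / (a + b)))"

definition lam_0 :: "real \<Rightarrow> real \<Rightarrow> real" where
  "lam_0 a b = (if a = b then a else
     (a * ln a + b * ln b - (a + b) * ln ((a + b) / 2)) / (2 * ln ((a + b) / 2) - ln a - ln b))"

definition lam_1 :: "real \<Rightarrow> real \<Rightarrow> real" where
  "lam_1 a b = (if a = b then a else
     (b - a)^2 / (4 * (a * ln a + b * ln b - (a + b) * ln ((a + b) / 2))))"

definition harm_mean :: "real \<Rightarrow> real \<Rightarrow> real" where
  "harm_mean a b = 2 * inverse (1 / a + 1 / b)"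

definition geom_mean :: "real \<Rightarrow> real \<Rightarrow> real" where
  "geom_mean a b = sqrt (a * b)"

definition log_mean :: "real \<Rightarrow> real \<Rightarrow> real" where
  "log_mean a b = (if a = b then a else (b - a) / (ln b - ln a))"

definition ident_mean :: "real \<Rightarrow> real \<Rightarrow> real" where
  "ident_mean a b = (if a = b then a else
     (1 / exp 1) * ((b powr b) / (a powr a)) powr (1 / (b - a)))"

end

theory Submission
  imports Defs
begin

(* All seven means are symmetric and homogeneous of degree one, so for a \<noteq> b we write
   a = A (1 - x), b = A (1 + x) with A = (a + b)/2 > 0 and 0 < |x| < 1.  With
     \<ell>(x) = ln (1 + x) - ln (1 - x)          (= 2 artanh x),
     P(x) = - ln (1 + x) - ln (1 - x)        (= - ln (1 - x^2)),
     Q(x) = x \<ell>(x) - P(x)                  (= (1+x) ln (1+x) + (1-x) ln (1-x))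
   each mean becomes A times an explicit function of x (lemmas *_normal):
     1 - x^2,  P (1-x^2)/x^2,  sqrt (1-x^2),  Q/P,  2x/\<ell>,  x^2/Q,  exp (\<ell>/(2x) - P/2 - 1).
   These are even in x, so the theorem reduces to six inequalities between them for
   0 < x < 1.  Each of those is an inequality between \<ell>, P and x, proved by the
   monotonicity method: the difference vanishes at 0 and has a nonnegative derivative.
   Two of them have a removable singularity at 0; there we replace continuity at 0 by a
   linear lower bound near 0 (lemma nonneg_by_deriv_near_zero).  The only non-obvious
   auxiliary estimate is Lazarevic's bound \<ell>(x) \<le> 2x (1-x^2)^(-1/3). *)

lemma nondecreasing_by_deriv:
  fixes f f' :: "real \<Rightarrow> real"
  assumes "c \<le> x"
    and "\<And>y. c \<le> y \<Longrightarrow> y \<le> x \<Longrightarrow> (f has_real_derivative f' y) (at y)"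
    and "\<And>y. c \<le> y \<Longrightarrow> y \<le> x \<Longrightarrow> 0 \<le> f' y"
  shows "f c \<le> f x"
  using assms by (intro DERIV_nonneg_imp_nondecreasing[OF assms(1)]) blast

lemma nonneg_by_deriv_near_zero:
  fixes f f' :: "real \<Rightarrow> real"
  assumes "0 < x" "0 < d" "0 \<le> K"
    and deriv: "\<And>y. 0 < y \<Longrightarrow> y \<le> x \<Longrightarrow> (f has_real_derivative f' y) (at y)"
    and sign: "\<And>y. 0 < y \<Longrightarrow> y \<le> x \<Longrightarrow> 0 \<le> f' y"
    and near_zero: "\<And>e. 0 < e \<Longrightarrow> e \<le> d \<Longrightarrow> -(K * e) \<le> f e"
  shows "0 \<le> f x"
proof (rule ccontr)
  assume "\<not> 0 \<le> f x"
  define e where "e = min (min x d) (- f x / (K + 1))"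
  have "0 < - f x / (K + 1)" using assms \<open>\<not> 0 \<le> f x\<close> by (intro divide_pos_pos) auto
  then have e: "0 < e" "e \<le> x" "e \<le> d" using assms by (auto simp: e_def)
  have "f e \<le> f x"
    by (rule nondecreasing_by_deriv[where f = f and f' = f'])
      (use e in \<open>auto intro: deriv sign\<close>)
  moreover have "-(K * e) \<le> f e" using near_zero e by blast
  moreover have "K * e < - f x"
  proof -
    have "K * e \<le> K * (- f x / (K + 1))" using assms by (intro mult_left_mono) (auto simp: e_def)
    also have "\<dots> < - f x" using assms \<open>\<not> 0 \<le> f x\<close> by (simp add: field_simps)
    finally show ?thesis .
  qed
  ultimately show False by linarith
qed

definition lnratio :: "real \<Rightarrow> real" where
  "lnratio x = ln (1 + x) - ln (1 - x)"

definition lnprod :: "real \<Rightarrow> real" where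
  "lnprod x = - ln (1 + x) - ln (1 - x)"

definition lnmix :: "real \<Rightarrow> real" where
  "lnmix x = x * lnratio x - lnprod x"

lemma lnratio_minus: "lnratio (- x) = - lnratio x"
  by (simp add: lnratio_def)

lemma lnprod_minus: "lnprod (- x) = lnprod x"
  by (simp add: lnprod_def)

lemma lnmix_minus: "lnmix (- x) = lnmix x"
  by (simp add: lnmix_def lnratio_minus lnprod_minus)

lemma one_minus_sq:
  assumes "\<bar>y\<bar> < (1::real)"
  shows "0 < 1 - y^2" "1 - y^2 \<noteq> 0" "y^2 \<noteq> 1" "y^2 < 1"
proof -
  show pos: "0 < 1 - y^2" "y^2 < 1" using assms by (auto simp: abs_square_less_1)
  then show "1 - y^2 \<noteq> 0" "y^2 \<noteq> 1" by auto
qed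

lemma lnprod_eq: "\<bar>y\<bar> < 1 \<Longrightarrow> lnprod y = - ln (1 - y^2)"
proof -
  assume y: "\<bar>y\<bar> < 1"
  then have "ln (1 - y^2) = ln ((1 - y) * (1 + y))" by (simp add: power2_eq_square algebra_simps)
  also have "\<dots> = ln (1 - y) + ln (1 + y)" using y by (simp add: ln_mult abs_less_iff)
  finally show ?thesis unfolding lnprod_def by simp
qed

lemma lnratio_deriv: "\<bar>y\<bar> < 1 \<Longrightarrow> (lnratio has_real_derivative 2 / (1 - y^2)) (at y)"
  unfolding lnratio_def
  by (auto intro!: derivative_eq_intros simp: field_simps power2_eq_square)

lemma lnprod_deriv: "\<bar>y\<bar> < 1 \<Longrightarrow> (lnprod has_real_derivative 2 * y / (1 - y^2)) (at y)"
  unfolding lnprod_def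
  by (auto intro!: derivative_eq_intros simp: field_simps power2_eq_square)

(* Q' = \<ell>: the P'-terms cancel against the derivative of x \<ell>(x). *)
lemma lnmix_deriv: "\<bar>y\<bar> < 1 \<Longrightarrow> (lnmix has_real_derivative lnratio y) (at y)"
  unfolding lnmix_def
  by (auto intro!: derivative_eq_intros lnratio_deriv lnprod_deriv
      simp: field_simps power2_eq_square)

lemma lnratio_deriv_chain [derivative_intros]:
  "(g has_real_derivative g') (at y within S) \<Longrightarrow> \<bar>g y\<bar> < 1 \<Longrightarrow>
   ((\<lambda>x. lnratio (g x)) has_real_derivative (2 / (1 - (g y)^2)) * g') (at y within S)"
  using DERIV_chain2[OF lnratio_deriv] by blast

lemma lnprod_deriv_chain [derivative_intros]:
  "(g has_real_derivative g') (at y within S) \<Longrightarrow> \<bar>g y\<bar> < 1 \<Longrightarrow>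
   ((\<lambda>x. lnprod (g x)) has_real_derivative (2 * g y / (1 - (g y)^2)) * g') (at y within S)"
  using DERIV_chain2[OF lnprod_deriv] by blast

lemma lnmix_deriv_chain [derivative_intros]:
  "(g has_real_derivative g') (at y within S) \<Longrightarrow> \<bar>g y\<bar> < 1 \<Longrightarrow>
   ((\<lambda>x. lnmix (g x)) has_real_derivative lnratio (g y) * g') (at y within S)"
  using DERIV_chain2[OF lnmix_deriv] by blast

lemma lnratio_ge: assumes "0 \<le> x" "x < 1" shows "2 * x \<le> lnratio x"
proof -
  define D where "D = (\<lambda>y. lnratio y - 2 * y)"
  have "D 0 \<le> D x"
  proof (rule nondecreasing_by_deriv[where f = D])
    fix y assume "0 \<le> y" "y \<le> x"
    then have y: "\<bar>y\<bar> < 1" using assms by auto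
    then show "(D has_real_derivative 2 / (1 - y^2) - 2) (at y)"
      unfolding D_def
      by (auto intro!: derivative_eq_intros)
    have "1 - y^2 \<le> 1" "0 < 1 - y^2" using one_minus_sq[OF y] by auto
    then show "0 \<le> 2 / (1 - y^2) - 2" by (simp add: field_simps)
  qed (use assms in auto)
  then show ?thesis by (simp add: D_def lnratio_def)
qed

lemma lnratio_le: assumes "0 \<le> x" "x < 1" shows "lnratio x \<le> 2 * x / (1 - x^2)"
proof -
  define D where "D = (\<lambda>y. 2 * y / (1 - y^2) - lnratio y)"
  have "D 0 \<le> D x"
  proof (rule nondecreasing_by_deriv[where f = D])
    fix y assume "0 \<le> y" "y \<le> x"
    then have y: "\<bar>y\<bar> < 1" using assms by auto
    note ne = one_minus_sq[OF y]
    show "(D has_real_derivative 4 * y^2 / (1 - y^2)^2) (at y)"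
      unfolding D_def
      apply (rule DERIV_cong)
       apply (use y ne in \<open>auto intro!: derivative_eq_intros\<close>)[1]
      using ne by (simp add: divide_simps, (simp add: power2_eq_square algebra_simps)?)
  qed (use assms in auto)
  then show ?thesis by (simp add: D_def lnratio_def)
qed

lemma lnprod_ge: assumes "\<bar>x\<bar> < 1" shows "x^2 \<le> lnprod x"
proof -
  have "ln (1 - x^2) \<le> (1 - x^2) - 1" using one_minus_sq[OF assms] by (intro ln_le_minus_one) auto
  then show ?thesis using lnprod_eq[OF assms] by simp
qed

lemma lnprod_le: assumes "\<bar>x\<bar> < 1" shows "lnprod x \<le> x^2 / (1 - x^2)"
proof -
  have p: "0 < 1 - x^2" using one_minus_sq[OF assms] by simp
  then have "ln (1 / (1 - x^2)) \<le> 1 / (1 - x^2) - 1" by (intro ln_le_minus_one) simp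
  also have "1 / (1 - x^2) - 1 = x^2 / (1 - x^2)" using p by (simp add: field_simps)
  finally show ?thesis using lnprod_eq[OF assms] p by (simp add: ln_div)
qed

lemma lnmix_ge: assumes "0 \<le> x" "x < 1" shows "x^2 \<le> lnmix x"
proof -
  define D where "D = (\<lambda>y. lnmix y - y^2)"
  have "D 0 \<le> D x"
  proof (rule nondecreasing_by_deriv[where f = D])
    fix y assume "0 \<le> y" "y \<le> x"
    then have y: "\<bar>y\<bar> < 1" using assms by auto
    then show "(D has_real_derivative lnratio y - 2 * y) (at y)"
      unfolding D_def
      by (auto intro!: derivative_eq_intros)
    show "0 \<le> lnratio y - 2 * y" using lnratio_ge[of y] \<open>0 \<le> y\<close> y by auto
  qed (use assms in auto)
  then show ?thesis by (simp add: D_def lnmix_def lnprod_def lnratio_def)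
qed

lemma two_ln_le: fixes r :: real assumes "1 \<le> r" shows "2 * ln r \<le> r - 1 / r"
proof -
  define D :: "real \<Rightarrow> real" where "D = (\<lambda>y. y - 1 / y - 2 * ln y)"
  have "D 1 \<le> D r"
  proof (rule nondecreasing_by_deriv[where f = D])
    fix y :: real assume "1 \<le> y" "y \<le> r"
    show "(D has_real_derivative (y - 1)^2 / y^2) (at y)"
      unfolding D_def
      using \<open>1 \<le> y\<close> by (auto intro!: derivative_eq_intros simp: field_simps power2_eq_square)
    show "0 \<le> (y - 1)^2 / y^2" by simp
  qed (use assms in auto)
  then show ?thesis by (simp add: D_def)
qed

(* Lazarevic's inequality: artanh x \<le> x (1 - x^2)^(-1/3), proved by monotonicity
   after writing m = (1 - y^2)^(1/3) and using m \<le> 1 - y^2/3. *)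
lemma lnratio_le_powr: assumes "0 \<le> x" "x < 1" shows "lnratio x \<le> 2 * x * (1 - x^2) powr (-1/3)"
proof -
  define D where "D = (\<lambda>y. 2 * y * (1 - y^2) powr (-1/3) - lnratio y)"
  have "D 0 \<le> D x"
  proof (rule nondecreasing_by_deriv[where f = D])
    fix y assume "0 \<le> y" "y \<le> x"
    then have y: "\<bar>y\<bar> < 1" using assms by auto
    note ne = one_minus_sq[OF y]
    define m where "m = (1 - y^2) powr (1/3)"
    have m0: "0 < m" using ne by (simp add: m_def)
    have m3: "m^3 = 1 - y^2"
    proof -
      have "m^3 = m powr (real 3)" using m0 by (simp only: powr_realpow)
      also have "\<dots> = (1 - y^2) powr (1/3 * 3)" unfolding m_def by (simp add: powr_powr)
      finally show ?thesis using ne by simp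
    qed
    have e1: "(1 - y^2) powr (-1/3) = 1 / m" unfolding m_def by (simp add: powr_minus_divide)
    have e2: "(1 - y^2) powr (-1/3 - 1) = 1 / m^4"
    proof -
      have "(1 - y^2) powr (-1/3 - 1) = (1 - y^2) powr (-1/3) / (1 - y^2) powr 1"
        by (rule powr_diff)
      also have "\<dots> = (1 / m) / m^3" using e1 m3 ne by simp
      finally show ?thesis by (simp add: power_eq_if)
    qed
    show "(D has_real_derivative
           (2 * (1 - y^2) + 4 * y^2 / 3 - 2 * m) / m^4) (at y)"
    proof -
      have d1: "((\<lambda>y. 1 - y^2) has_real_derivative -(2 * y)) (at y)"
        by (auto intro!: derivative_eq_intros)
      have d2: "((\<lambda>y. (1 - y^2) powr (-1/3)) has_real_derivative
                 (-1/3) * (1 - y^2) powr (-1/3 - 1) * (-(2 * y))) (at y)"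
        using DERIV_fun_powr[OF d1, of "-1/3"] ne(1) by simp
      have d3: "((\<lambda>y. 2 * y) has_real_derivative 2) (at y)"
        by (auto intro!: derivative_eq_intros)
      show ?thesis unfolding D_def
        apply (rule DERIV_cong[OF DERIV_diff[OF DERIV_mult[OF d3 d2] lnratio_deriv[OF y]]])
        unfolding e1 e2 using m0 ne m3
        by (simp add: divide_simps) (use m3 in algebra)
    qed
    have "m \<le> 1 - y^2 / 3"
    proof (rule ccontr)
      assume "\<not> ?thesis"
      then have "(1 - y^2 / 3)^3 < m^3" using ne by (intro power_strict_mono) auto
      moreover have "1 - y^2 \<le> (1 - y^2 / 3)^3"
      proof -
        have "(1 - y^2 / 3)^3 - (1 - y^2) = y^4 * (9 - y^2) / 27" by algebra
        also have "\<dots> \<ge> 0" using ne by simp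
        finally show ?thesis by simp
      qed
      ultimately show False using m3 by simp
    qed
    then show "0 \<le> (2 * (1 - y^2) + 4 * y^2 / 3 - 2 * m) / m^4" using m0 by simp
  qed (use assms in auto)
  then show ?thesis by (simp add: D_def lnratio_def)
qed

lemma lnratio_cube_le: assumes "0 \<le> x" "x < 1" shows "(lnratio x)^3 \<le> 8 * x^3 / (1 - x^2)"
proof -
  note ne = one_minus_sq[of x]
  define c where "c = (1 - x^2) powr (-1/3)"
  have c0: "0 < c" using ne assms by (simp add: c_def)
  have c3: "c^3 = 1 / (1 - x^2)"
  proof -
    have "c^3 = c powr (real 3)" using c0 by (simp only: powr_realpow)
    also have "\<dots> = (1 - x^2) powr (- 1)" unfolding c_def by (simp add: powr_powr)
    finally show ?thesis using ne assms by (simp add: powr_minus_divide)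
  qed
  have "0 \<le> lnratio x" using lnratio_ge[OF assms] assms by linarith
  then have "(lnratio x)^3 \<le> (2 * x * c)^3"
    using lnratio_le_powr[OF assms] by (intro power_mono) (auto simp: c_def)
  also have "\<dots> = 8 * x^3 / (1 - x^2)" using c3 by (simp add: power_mult_distrib)
  finally show ?thesis .
qed

section \<open>The six inequalities in normalized form\<close>

(* \<lambda>_{-1} \<le> G:  P (1 - x^2) / x^2 \<le> sqrt (1 - x^2), from two_ln_le at r = 1/sqrt (1 - x^2). *)
lemma lnprod_le_sqrt: assumes "0 < x" "x < 1" shows "lnprod x * (1 - x^2) / x^2 \<le> sqrt (1 - x^2)"
proof -
  have ax: "\<bar>x\<bar> < 1" using assms by auto
  note ne = one_minus_sq[OF ax]
  define s where "s = sqrt (1 - x^2)"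
  have s0: "0 < s" and s1: "s < 1" and ss: "s^2 = 1 - x^2"
    using assms ne by (simp_all add: s_def)
  have "lnprod x = - ln (s^2)" using lnprod_eq[OF ax] ss by simp
  also have "\<dots> = 2 * ln (1 / s)" using s0 by (simp add: ln_div ln_realpow)
  also have "\<dots> \<le> 1 / s - s" using two_ln_le[of "1 / s"] s0 s1 by simp
  also have "\<dots> = x^2 / s" using s0 ss by (simp add: field_simps power2_eq_square)
  finally have "lnprod x \<le> x^2 / s" .
  then have "lnprod x * (1 - x^2) / x^2 \<le> x^2 / s * (1 - x^2) / x^2"
    using assms ne by (intro divide_right_mono mult_right_mono) auto
  also have "\<dots> = x^2 / s * s^2 / x^2" using ss by simp
  also have "\<dots> = s" using assms s0 by (simp add: field_simps power2_eq_square)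
  finally show ?thesis by (simp add: s_def)
qed

(* Derivative sign needed for lnratio_sqrt_ge below; it reduces to ln s \<le> s - 1. *)
lemma lnratio_sqrt_aux:
  assumes "0 \<le> x" "x < 1" shows "0 \<le> lnratio x + (x * lnprod x - 2 * x) / sqrt (1 - x^2)"
proof -
  define D where "D = (\<lambda>y. lnratio y + (y * lnprod y - 2 * y) / sqrt (1 - y^2))"
  have "D 0 \<le> D x"
  proof (rule nondecreasing_by_deriv[where f = D])
    fix y assume "0 \<le> y" "y \<le> x"
    then have y: "\<bar>y\<bar> < 1" using assms by auto
    note ne = one_minus_sq[OF y]
    define s where "s = sqrt (1 - y^2)"
    have s0: "0 < s" and ss: "s^2 = 1 - y^2" using ne by (simp_all add: s_def)
    show "(D has_real_derivative
           (2 * sqrt (1 - y^2) + lnprod y + 2 * y^2 - 2) / (sqrt (1 - y^2))^3) (at y)"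
      unfolding D_def
      apply (rule DERIV_cong)
       apply (use y ne in \<open>auto intro!: derivative_eq_intros\<close>)[1]
      unfolding s_def[symmetric]
      using ne s0 by (simp add: divide_simps) (use ss in algebra)
    have "lnprod y = - 2 * ln s" using lnprod_eq[OF y] ss[symmetric] s0 by (simp add: ln_realpow)
    moreover have "ln s \<le> s - 1" using s0 by (rule ln_le_minus_one)
    ultimately have "0 \<le> 2 * s + lnprod y + 2 * y^2 - 2" using zero_le_power2[of y] by linarith
    then show "0 \<le> (2 * sqrt (1 - y^2) + lnprod y + 2 * y^2 - 2) / (sqrt (1 - y^2))^3"
      using s0 by (simp add: s_def[symmetric])
  qed (use assms in auto)
  then show ?thesis by (simp add: D_def lnprod_def lnratio_def)
qed

(* G \<le> \<lambda>_0:  (1 + sqrt (1 - x^2)) P \<le> x \<ell>, i.e. sqrt (1 - x^2) P \<le> Q. *)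
lemma lnratio_sqrt_ge:
  assumes "0 \<le> x" "x < 1" shows "(1 + sqrt (1 - x^2)) * lnprod x \<le> x * lnratio x"
proof -
  define D where "D = (\<lambda>y. y * lnratio y - (1 + sqrt (1 - y^2)) * lnprod y)"
  have "D 0 \<le> D x"
  proof (rule nondecreasing_by_deriv[where f = D])
    fix y assume "0 \<le> y" "y \<le> x"
    then have y: "\<bar>y\<bar> < 1" using assms by auto
    note ne = one_minus_sq[OF y]
    define s where "s = sqrt (1 - y^2)"
    have s0: "0 < s" and ss: "s^2 = 1 - y^2" using ne by (simp_all add: s_def)
    show "(D has_real_derivative lnratio y + (y * lnprod y - 2 * y) / sqrt (1 - y^2)) (at y)"
      unfolding D_def
      apply (rule DERIV_cong)
       apply (use y ne in \<open>auto intro!: derivative_eq_intros\<close>)[1]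
      unfolding s_def[symmetric]
      using ne s0 by (simp add: divide_simps) (use ss in algebra)
    show "0 \<le> lnratio y + (y * lnprod y - 2 * y) / sqrt (1 - y^2)"
      using lnratio_sqrt_aux[of y] \<open>0 \<le> y\<close> \<open>y \<le> x\<close> assms by auto
  qed (use assms in auto)
  then show ?thesis by (simp add: D_def lnprod_def lnratio_def)
qed

(* \<lambda>_0 \<le> L:  x \<ell>^2 \<le> P (\<ell> + 2x), i.e. Q \<ell> \<le> 2 x P.  The derivative of
   P - x \<ell>^2/(\<ell> + 2x) has the sign of 8x^3/(1 - x^2) - \<ell>^3 (lnratio_cube_le). *)
lemma lnratio_sq_le:
  assumes "0 < x" "x < 1" shows "x * (lnratio x)^2 \<le> lnprod x * (lnratio x + 2 * x)"
proof -
  define F where "F = (\<lambda>y. lnprod y - y * (lnratio y)^2 / (lnratio y + 2 * y))"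
  have "0 \<le> F x"
  proof (rule nonneg_by_deriv_near_zero[where f = F and d = "1/2" and K = 4])
    fix y assume "0 < y" "y \<le> x"
    then have y: "\<bar>y\<bar> < 1" using assms by auto
    note ne = one_minus_sq[OF y]
    have lp: "0 < lnratio y + 2 * y" using lnratio_ge[of y] \<open>0 < y\<close> y by auto
    show "(F has_real_derivative (8 * y^3 / (1 - y^2) - (lnratio y)^3) / (lnratio y + 2 * y)^2) (at y)"
      unfolding F_def
      apply (rule DERIV_cong)
       apply (use y ne lp in \<open>auto intro!: derivative_eq_intros\<close>)[1]
      using ne lp
      by (simp add: divide_simps, (simp add: power2_eq_square power3_eq_cube algebra_simps)?)
    show "0 \<le> (8 * y^3 / (1 - y^2) - (lnratio y)^3) / (lnratio y + 2 * y)^2"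
      using lnratio_cube_le[of y] \<open>0 < y\<close> y by simp
  next
    fix e :: real assume e: "0 < e" "e \<le> 1/2"
    have ae: "\<bar>e\<bar> < 1" using e by auto
    have l0: "0 \<le> lnratio e" using lnratio_ge[of e] e by auto
    have "e^2 \<le> (1/2)^2" using e by (intro power_mono) auto
    then have "2 * e / (1 - e^2) \<le> 2 * e / (3/4)"
      using e one_minus_sq[OF ae] by (intro divide_left_mono) (auto simp: power2_eq_square)
    then have lu: "lnratio e \<le> 8/3 * e" using lnratio_le[of e] e by simp
    have "(lnratio e)^2 / (lnratio e + 2 * e) \<le> lnratio e"
      using l0 e by (simp add: divide_simps power2_eq_square) (intro mult_left_mono, auto)
    then have "(lnratio e)^2 / (lnratio e + 2 * e) \<le> 8/3 * e" using lu by linarith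
    then have "e * (lnratio e)^2 / (lnratio e + 2 * e) \<le> e * (8/3 * e)"
      using mult_left_mono[of _ _ e] e by fastforce
    moreover have "e * (8/3 * e) \<le> 4 * e" using e by (simp add: mult_mono)
    moreover have "0 \<le> lnprod e" using lnprod_ge[OF ae] by (meson order.trans zero_le_power2)
    ultimately show "-(4 * e) \<le> F e" unfolding F_def by linarith
  qed (use assms in auto)
  moreover have "0 < lnratio x + 2 * x" using lnratio_ge[of x] assms by auto
  ultimately show ?thesis by (simp add: F_def divide_simps mult.commute)
qed

(* L \<le> \<lambda>_1:  x \<ell> \<le> 2 P, i.e. 2 x Q \<le> x^2 \<ell>. *)
lemma lnratio_le_lnprod: assumes "0 \<le> x" "x < 1" shows "x * lnratio x \<le> 2 * lnprod x"
proof -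
  define D where "D = (\<lambda>y. 2 * lnprod y - y * lnratio y)"
  have "D 0 \<le> D x"
  proof (rule nondecreasing_by_deriv[where f = D])
    fix y assume "0 \<le> y" "y \<le> x"
    then have y: "\<bar>y\<bar> < 1" using assms by auto
    note ne = one_minus_sq[OF y]
    show "(D has_real_derivative 2 * y / (1 - y^2) - lnratio y) (at y)"
      unfolding D_def
      apply (rule DERIV_cong)
       apply (use y ne in \<open>auto intro!: derivative_eq_intros\<close>)[1]
      using ne by (simp add: divide_simps, (simp add: power2_eq_square algebra_simps)?)
    show "0 \<le> 2 * y / (1 - y^2) - lnratio y" using lnratio_le[of y] \<open>0 \<le> y\<close> y by auto
  qed (use assms in auto)
  then show ?thesis by (simp add: D_def lnprod_def lnratio_def)
qed

(* \<lambda>_1 \<le> I:  ln (x^2/Q) \<le> \<ell>/(2x) - P/2 - 1.  The derivative of the difference has the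
   sign of P (\<ell> + 2x) - x \<ell>^2, which is lnratio_sq_le. *)
lemma ln_lnmix_le:
  assumes "0 < x" "x < 1" shows "ln (x^2 / lnmix x) \<le> lnratio x / (2 * x) - lnprod x / 2 - 1"
proof -
  define G where "G = (\<lambda>y. lnratio y / (2 * y) - lnprod y / 2 - 1 + ln (lnmix y / y^2))"
  have "0 \<le> G x"
  proof (rule nonneg_by_deriv_near_zero[where f = G and d = "1/2" and K = 1])
    fix y assume "0 < y" "y \<le> x"
    then have y: "\<bar>y\<bar> < 1" "0 < y" using assms by auto
    note ne = one_minus_sq[OF y(1)]
    have qp: "0 < lnmix y" using lnmix_ge[of y] y by (smt (verit) zero_less_power)
    have qy: "0 < lnmix y / y^2" using qp y by simp
    have dd: "(G has_real_derivative
             (4 * y / (1 - y^2) - lnratio y * 2) / (4 * (y * y)) - 4 * y / (4 - y^2 * 4) +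
              y^2 * (lnratio y * y^2 - lnmix y * (2 * y)) / (lnmix y * y ^ 4)) (at y)"
      unfolding G_def
      apply (rule DERIV_cong)
       apply (use y ne qy in \<open>auto intro!: derivative_eq_intros\<close>)[1]
      using ne qp y by simp
    define w where "w = 1 / (1 - y^2)"
    have w1: "4 * y / (1 - y^2) = 4 * y * w" by (simp add: w_def)
    have w2: "4 * y / (4 - y^2 * 4) = y * w" unfolding w_def using ne by (simp add: field_simps)
    have wr: "w * (1 - y^2) = 1" unfolding w_def using ne by simp
    have "(4 * y * w - lnratio y * 2) / (4 * (y * y)) - y * w
          + y^2 * (lnratio y * y^2 - lnmix y * (2 * y)) / (lnmix y * y ^ 4)
          = (lnprod y * (lnratio y + 2 * y) - y * (lnratio y)^2) / (2 * y^2 * lnmix y)"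
      using y qp by (simp add: field_simps) (use wr lnmix_def[of y] in algebra)
    then show "(G has_real_derivative
             (lnprod y * (lnratio y + 2 * y) - y * (lnratio y)^2) / (2 * y^2 * lnmix y)) (at y)"
      using dd unfolding w1 w2 by simp
    show "0 \<le> (lnprod y * (lnratio y + 2 * y) - y * (lnratio y)^2) / (2 * y^2 * lnmix y)"
      using lnratio_sq_le[of y] y qp by simp
  next
    fix e :: real assume e: "0 < e" "e \<le> 1/2"
    have ae: "\<bar>e\<bar> < 1" using e by auto
    have l1: "1 \<le> lnratio e / (2 * e)" using lnratio_ge[of e] e by simp
    have "1 \<le> lnmix e / e^2" using lnmix_ge[of e] e by simp
    then have l2: "0 \<le> ln (lnmix e / e^2)" by simp
    have "e^2 \<le> (1/2)^2" using e by (intro power_mono) auto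
    then have "e^2 / (1 - e^2) \<le> e^2 / (3/4)"
      using one_minus_sq[OF ae] by (intro divide_left_mono) (auto simp: power_divide)
    then have "lnprod e \<le> e^2 / (3/4)" using lnprod_le[OF ae] by linarith
    moreover have "e^2 / (3/4) \<le> 2 * e" using e by (simp add: power2_eq_square)
    ultimately show "-(1 * e) \<le> G e" using l1 l2 by (simp add: G_def)
  qed (use assms in auto)
  moreover have "0 < lnmix x" using lnmix_ge[of x] assms by (smt (verit) zero_less_power)
  ultimately show ?thesis using assms by (simp add: G_def ln_div)
qed

lemma normalized_chain:
  assumes "x \<noteq> 0" "\<bar>x\<bar> < 1"
  shows "1 - x^2 \<le> lnprod x * (1 - x^2) / x^2"
    and "lnprod x * (1 - x^2) / x^2 \<le> sqrt (1 - x^2)"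
    and "sqrt (1 - x^2) \<le> lnmix x / lnprod x"
    and "lnmix x / lnprod x \<le> 2 * x / lnratio x"
    and "2 * x / lnratio x \<le> x^2 / lnmix x"
    and "x^2 / lnmix x \<le> exp (lnratio x / (2 * x) - lnprod x / 2 - 1)"
proof -
  define y where "y = \<bar>x\<bar>"
  have y: "0 < y" "y < 1" "\<bar>y\<bar> < 1" using assms by (auto simp: y_def)
  have y_sq: "x^2 = y^2" by (simp add: y_def)
  have y_even: "lnprod x = lnprod y" "lnmix x = lnmix y" "2 * x / lnratio x = 2 * y / lnratio y"
    "lnratio x / (2 * x) = lnratio y / (2 * y)"
    by (cases "0 \<le> x"; simp add: y_def lnprod_minus lnmix_minus lnratio_minus)+
  note ne = one_minus_sq[OF y(3)]
  have P_pos: "0 < lnprod y" using lnprod_ge[OF y(3)] y by (smt (verit) zero_less_power)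
  have l_pos: "0 < lnratio y" using lnratio_ge[of y] y by simp
  have Q_pos: "0 < lnmix y" using lnmix_ge[of y] y by (smt (verit) zero_less_power)
  show "1 - x^2 \<le> lnprod x * (1 - x^2) / x^2"
    using mult_right_mono[OF lnprod_ge[OF y(3)], of "1 - y^2"] ne y
    unfolding y_sq y_even by (simp add: field_simps)
  show "lnprod x * (1 - x^2) / x^2 \<le> sqrt (1 - x^2)"
    unfolding y_sq y_even using lnprod_le_sqrt[OF y(1,2)] .
  show "sqrt (1 - x^2) \<le> lnmix x / lnprod x"
    using lnratio_sqrt_ge[of y] y P_pos unfolding y_sq y_even
    by (simp add: lnmix_def field_simps algebra_simps)
  show "lnmix x / lnprod x \<le> 2 * x / lnratio x"
    using lnratio_sq_le[OF y(1,2)] P_pos l_pos unfolding y_even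
    by (simp add: lnmix_def field_simps power2_eq_square algebra_simps)
  show "2 * x / lnratio x \<le> x^2 / lnmix x"
    using lnratio_le_lnprod[of y] y Q_pos l_pos unfolding y_sq y_even
    by (simp add: lnmix_def field_simps power2_eq_square algebra_simps)
  show "x^2 / lnmix x \<le> exp (lnratio x / (2 * x) - lnprod x / 2 - 1)"
    using ln_lnmix_le[OF y(1,2)] y Q_pos unfolding y_sq y_even
    by (metis exp_le_cancel_iff exp_ln divide_pos_pos zero_less_power)
qed

section \<open>The means in normalized form\<close>

context
  fixes A x :: real
  assumes A_pos: "0 < A" and x_nz: "x \<noteq> 0" and x_bound: "\<bar>x\<bar> < 1"
begin

lemma ln_scaled: "ln (A * (1 - x)) = ln A + ln (1 - x)" "ln (A * (1 + x)) = ln A + ln (1 + x)"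
  using A_pos x_bound by (simp_all add: ln_mult abs_less_iff)

lemma factors_pos: "0 < 1 - x" "0 < 1 + x"
  using x_bound by auto

lemma one_minus_sq_factor: "1 - x^2 = (1 - x) * (1 + x)"
  by (simp add: power2_eq_square algebra_simps)

lemma mid_scaled: "(A * (1 - x) + A * (1 + x)) / 2 = A"
  by (simp add: algebra_simps)

lemma scaled_ne: "A * (1 - x) \<noteq> A * (1 + x)"
  using A_pos x_nz by simp

lemma harm_mean_normal: "harm_mean (A * (1 - x)) (A * (1 + x)) = A * (1 - x^2)"
proof -
  have "1 / (A * (1 - x)) + 1 / (A * (1 + x)) = 2 / (A * (1 - x^2))"
    unfolding one_minus_sq_factor using A_pos factors_pos by (simp add: divide_simps)
  then show ?thesis by (simp add: harm_mean_def)
qed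

lemma geom_mean_normal: "geom_mean (A * (1 - x)) (A * (1 + x)) = A * sqrt (1 - x^2)"
proof -
  have "A * (1 - x) * (A * (1 + x)) = A^2 * (1 - x^2)" by (simp add: power2_eq_square algebra_simps)
  then show ?thesis using A_pos by (simp add: geom_mean_def real_sqrt_mult)
qed

lemma log_mean_normal: "log_mean (A * (1 - x)) (A * (1 + x)) = A * (2 * x / lnratio x)"
proof -
  have "log_mean (A * (1 - x)) (A * (1 + x)) = (A * (1 + x) - A * (1 - x)) / lnratio x"
    using scaled_ne by (simp add: log_mean_def ln_scaled lnratio_def)
  then show ?thesis by (simp add: algebra_simps)
qed

(* 2 ln ((a+b)/2) - ln a - ln b = P(x): numerator of \<lambda>_{-1}, denominator of \<lambda>_0. *)
lemma log_defect_normal: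
  "2 * ln ((A * (1 - x) + A * (1 + x)) / 2) - ln (A * (1 - x)) - ln (A * (1 + x)) = lnprod x"
  by (simp add: ln_scaled mid_scaled lnprod_def)

lemma lam_m1_normal:
  "lam_m1 (A * (1 - x)) (A * (1 + x)) = A * (lnprod x * (1 - x^2) / x^2)"
proof -
  note ne = one_minus_sq[OF x_bound]
  have den: "1 / (2 * (A * (1 - x))) + 1 / (2 * (A * (1 + x))) - 2 / (A * (1 - x) + A * (1 + x))
             = x^2 / (A * (1 - x^2))"
    unfolding one_minus_sq_factor using A_pos factors_pos
    by (simp add: divide_simps) (simp add: algebra_simps power2_eq_square)
  show ?thesis unfolding lam_m1_def log_defect_normal den using scaled_ne A_pos x_nz ne
    by (simp add: field_simps)
qed

(* a ln a + b ln b = 2 A ln A + A Q(x) : the numerator of \<lambda>_0 and denominator of \<lambda>_1. *)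
lemma entropy_normal:
  "A * (1 - x) * ln (A * (1 - x)) + A * (1 + x) * ln (A * (1 + x))
     - (A * (1 - x) + A * (1 + x)) * ln ((A * (1 - x) + A * (1 + x)) / 2) = A * lnmix x"
  unfolding ln_scaled mid_scaled lnmix_def lnratio_def lnprod_def by (simp add: algebra_simps)

lemma lam_0_normal: "lam_0 (A * (1 - x)) (A * (1 + x)) = A * (lnmix x / lnprod x)"
  using scaled_ne by (simp add: lam_0_def entropy_normal log_defect_normal)

lemma lam_1_normal: "lam_1 (A * (1 - x)) (A * (1 + x)) = A * (x^2 / lnmix x)"
proof -
  have "(A * (1 + x) - A * (1 - x))^2 = 4 * A^2 * x^2" by (simp add: power2_eq_square algebra_simps)
  then show ?thesis using scaled_ne A_pos
    by (simp add: lam_1_def entropy_normal power2_eq_square)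
qed

lemma ident_mean_normal:
  "ident_mean (A * (1 - x)) (A * (1 + x)) = A * exp (lnratio x / (2 * x) - lnprod x / 2 - 1)"
proof -
  let ?a = "A * (1 - x)" and ?b = "A * (1 + x)"
  have "?b powr ?b / ?a powr ?a = exp (?b * ln ?b - ?a * ln ?a)"
    using A_pos factors_pos by (simp add: powr_def exp_diff)
  then have "(?b powr ?b / ?a powr ?a) powr (1 / (?b - ?a))
             = exp ((?b * ln ?b - ?a * ln ?a) / (?b - ?a))"
    by (simp add: powr_def)
  also have "(?b * ln ?b - ?a * ln ?a) / (?b - ?a) = ln A + (lnratio x / (2 * x) - lnprod x / 2)"
    unfolding ln_scaled lnratio_def lnprod_def using A_pos x_nz by (simp add: field_simps)
  finally show ?thesis using scaled_ne A_pos factors_pos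
    by (simp add: ident_mean_def exp_add exp_diff)
qed

end

theorem mainTheorem15:
  fixes a b :: real
  assumes "a > 0" and "b > 0"
  shows "harm_mean a b \<le> lam_m1 a b \<and> lam_m1 a b \<le> geom_mean a b \<and>
         geom_mean a b \<le> lam_0 a b \<and> lam_0 a b \<le> log_mean a b \<and>
         log_mean a b \<le> lam_1 a b \<and> lam_1 a b \<le> ident_mean a b"
proof (cases "a = b")
  case True
  then show ?thesis using assms
    by (simp add: harm_mean_def geom_mean_def lam_m1_def lam_0_def lam_1_def
        log_mean_def ident_mean_def)
next
  case False
  define A x where "A = (a + b) / 2" and "x = (b - a) / (a + b)"
  have A: "0 < A" using assms by (simp add: A_def)
  have x: "x \<noteq> 0" "\<bar>x\<bar> < 1" using assms False by (auto simp: x_def abs_less_iff field_simps)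
  have a: "a = A * (1 - x)" and b: "b = A * (1 + x)"
    using assms by (simp_all add: A_def x_def field_simps)
  show ?thesis
    unfolding a b harm_mean_normal[OF A x] lam_m1_normal[OF A x] geom_mean_normal[OF A x]
      lam_0_normal[OF A x] log_mean_normal[OF A x] lam_1_normal[OF A x]
      ident_mean_normal[OF A x]
    using normalized_chain[OF x] A by (intro conjI mult_left_mono) auto
qed

end
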